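(* Let $X_k\in\operatorname{Gr}(n,r)$ and let $s_{k-m},\dots,s_{k-1},y_{k-m},\dots,y_{k-1}\in\mathbb{R}^{nr}$ be vectorizations of tangent vectors in $\mathbf{T}_{X_k}$. Let $S_k=[s_{k-m},\dots,s_{k-1}]$, $Y_k=[y_{k-m},\dots,y_{k-1}]$, $D_k=\operatorname{diag}[s_{k-m}^{\mathsf{T}}y_{k-m},\dots,s_{k-1}^{\mathsf{T}}y_{k-1}]$, let $R_k$ be the $m\times m$ upper triangular matrix with $(i,j)$ entry $s_{k-m+i-1}^{\mathsf{T}}y_{k-m+j-1}$ for $i\le j$ (assumed invertible), let $\gamma_k\in\mathbb{R}$, and let \[ H_k=\gamma_kI+\begin{bmatrix}S_k&\gamma_kY_k\end{bmatrix}\begin{bmatrix}R_k^{-\mathsf{T}}(D_k+\gamma_kY_k^{\mathsf{T}}Y_k)R_k^{-1}&-R_k^{-\mathsf{T}}\\-R_k^{-1}&0\end{bmatrix}\begin{bmatrix}S_k^{\mathsf{T}}\\ \gamma_kY_k^{\mathsf{T}}\end{bmatrix}. \] Then the (vectorized) tangent space $\mathbf{T}_{X_k}$ is an invariant subspace of $H_k$: if $v$ is the vectorization of a tangent in $\mathbf{T}_{X_k}$, then so is $H_kv$.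
   Context: Points of $\operatorname{Gr}(n,r)$ are represented by $X\in\mathbb{R}^{n\times r}$ with $X^{\mathsf{T}}X=I$; the tangent space is $\mathbf{T}_X=\{\Delta\in\mathbb{R}^{n\times r}:X^{\mathsf{T}}\Delta=0\}$, embedded in $\mathbb{R}^{nr}$ by column-wise vectorization. $H_k$ is the limited-memory BFGS (L-BFGS) compact representation of the Hessian approximation. *)

theory Defs
  imports "HOL-Analysis.Analysis"
begin

text \<open>Points of Gr(n,r): n x r matrices X with X^T X = I. Dimensions n, r, m are
  the cardinalities of the finite index types 'n, 'r, 'm.\<close>
definition grassmann_point :: "real^'r^'n \<Rightarrow> bool" where
  "grassmann_point X \<longleftrightarrow> transpose X ** X = mat 1"

definition tangent_space :: "real^'r^'n \<Rightarrow> (real^'r^'n) set" where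
  "tangent_space X = {D. transpose X ** D = 0}"

text \<open>Vectorization of an n x r matrix as a vector in R^{nr}, indexed by
  pairs (row, column) (the ordering of the index set is immaterial).\<close>
definition vectorize :: "real^'r^'n \<Rightarrow> real^('n \<times> 'r)" where
  "vectorize D = (\<chi> p. D $ fst p $ snd p)"

definition colmat :: "('m::finite \<Rightarrow> real^('n::finite \<times> 'r::finite)) \<Rightarrow> real^'m^('n \<times> 'r)" where
  "colmat s = (\<chi> p j. s j $ p)"

definition Dmat :: "('m::finite \<Rightarrow> real^('n::finite \<times> 'r::finite)) \<Rightarrow> ('m \<Rightarrow> real^('n \<times> 'r)) \<Rightarrow> real^'m^'m" where
  "Dmat s y = (\<chi> i j. if i = j then s i \<bullet> y i else 0)"

definition Rmat :: "('m::{finite,linorder} \<Rightarrow> real^('n::finite \<times> 'r::finite)) \<Rightarrow> ('m \<Rightarrow> real^('n \<times> 'r)) \<Rightarrow> real^'m::{finite,linorder}^'m::{finite,linorder}" where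
  "Rmat s y = (\<chi> i j. if i \<le> j then s i \<bullet> y j else 0)"

definition hblock :: "real^'m::finite^'p::finite \<Rightarrow> real^'m^'p \<Rightarrow> real^('m + 'm)^'p" where
  "hblock A B = (\<chi> p q. case q of Inl j \<Rightarrow> A $ p $ j | Inr j \<Rightarrow> B $ p $ j)"

definition block2 :: "real^'m::finite^'m \<Rightarrow> real^'m^'m \<Rightarrow> real^'m^'m \<Rightarrow> real^'m^'m \<Rightarrow> real^('m + 'm)^('m + 'm)" where
  "block2 A B C D = (\<chi> a b. case (a, b) of
      (Inl i, Inl j) \<Rightarrow> A $ i $ j | (Inl i, Inr j) \<Rightarrow> B $ i $ j
    | (Inr i, Inl j) \<Rightarrow> C $ i $ j | (Inr i, Inr j) \<Rightarrow> D $ i $ j)"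

definition Hmat :: "real \<Rightarrow> ('m::{finite,linorder} \<Rightarrow> real^('n::finite \<times> 'r::finite)) \<Rightarrow> ('m \<Rightarrow> real^('n \<times> 'r))
     \<Rightarrow> real^('n \<times> 'r)^('n \<times> 'r)" where
  "Hmat \<gamma> s y =
    (let S = colmat s; Y = colmat y; D = Dmat s y; R = Rmat s y; Ri = matrix_inv R;
         W = hblock S (\<gamma> *\<^sub>R Y);
         M = block2 (transpose Ri ** (D + \<gamma> *\<^sub>R (transpose Y ** Y)) ** Ri) (- transpose Ri) (- Ri) 0
     in \<gamma> *\<^sub>R mat 1 + W ** M ** transpose W)"

end

theory Submission
  imports Defs
begin

text \<open>Every term of H_k other than the multiple of the identity has the form W z with
  W = [S_k  \<gamma>Y_k], so it lies in the span of the columns s_i, y_i. Hence any subspace containing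
  all s_i and y_i is invariant under H_k; the vectorized tangent space is such a subspace, being
  the image of a linear kernel under the linear map vec.\<close>

lemma subspace_tangent_space: "subspace (tangent_space X)"
  unfolding subspace_def tangent_space_def
  by (simp add: matrix_add_ldistrib matrix_scalar_ac scalar_matrix_assoc[symmetric])

lemma linear_vectorize: "linear vectorize"
  by (rule linearI) (simp_all add: vectorize_def vec_eq_iff)

lemma matrix_vector_mult_in_subspace:
  fixes A :: "real^'q::finite^'p::finite"
  assumes V: "subspace V" and cols: "\<And>q. column q A \<in> V"
  shows "A *v z \<in> V"
  unfolding matrix_mult_sum scalar_mult_eq_scaleR
  by (rule subspace_sum[OF V], rule subspace_scale[OF V cols])

lemma column_colmat: "column j (colmat s) = s j"
  by (simp add: column_def colmat_def vec_eq_iff)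

lemma column_scaleR: "column j (c *\<^sub>R A) = c *\<^sub>R column j A"
  by (simp add: column_def vec_eq_iff)

lemma column_hblock:
  "column (Inl j) (hblock A B) = column j A"
  "column (Inr j) (hblock A B) = column j B"
  by (simp_all add: column_def hblock_def vec_eq_iff)

lemma Hmat_mult_in_subspace:
  assumes V: "subspace V"
    and s: "\<And>i. s i \<in> V" and y: "\<And>i. y i \<in> V" and v: "v \<in> V"
  shows "Hmat \<gamma> s y *v v \<in> V"
proof -
  define W where "W = hblock (colmat s) (\<gamma> *\<^sub>R colmat y)"
  obtain M where H: "Hmat \<gamma> s y = \<gamma> *\<^sub>R mat 1 + W ** M ** transpose W"
    unfolding Hmat_def W_def Let_def by blast
  have "column q W \<in> V" for q
    using s y subspace_scale[OF V]
    by (cases q) (simp_all add: W_def column_hblock column_scaleR column_colmat)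
  then have "W *v ((M ** transpose W) *v v) \<in> V"
    by (rule matrix_vector_mult_in_subspace[OF V])
  moreover have "Hmat \<gamma> s y *v v = \<gamma> *\<^sub>R v + W *v ((M ** transpose W) *v v)"
    unfolding H
    by (simp add: matrix_vector_mult_add_rdistrib matrix_vector_mul_assoc matrix_mul_assoc
        scaleR_matrix_vector_assoc[symmetric])
  ultimately show ?thesis
    using V v by (simp add: subspace_add subspace_scale)
qed

theorem lemma7p1:
  fixes X :: "real^'r::finite^'n::finite"
    and s y :: "'m::{finite,linorder} \<Rightarrow> real^'r^'n"
    and \<gamma> :: real
  assumes "grassmann_point X"
    and "\<And>i. s i \<in> tangent_space X"
    and "\<And>i. y i \<in> tangent_space X"
    and "invertible (Rmat (\<lambda>i. vectorize (s i)) (\<lambda>i. vectorize (y i)))"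
    and "v \<in> tangent_space X"
  shows "\<exists>w \<in> tangent_space X.
           Hmat \<gamma> (\<lambda>i. vectorize (s i)) (\<lambda>i. vectorize (y i)) *v vectorize v = vectorize w"
proof -
  let ?V = "vectorize ` tangent_space X"
  have "subspace ?V"
    by (rule linear_subspace_image[OF linear_vectorize subspace_tangent_space])
  then have "Hmat \<gamma> (\<lambda>i. vectorize (s i)) (\<lambda>i. vectorize (y i)) *v vectorize v \<in> ?V"
    by (rule Hmat_mult_in_subspace) (simp_all add: assms)
  then show ?thesis by blast
qed

end
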